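(* For all $x\in\mathbb{C}$ with $x\neq 0$ and all integers $n\ge0$, \[ \sum_{k=0}^n 2^k\frac{L_k(x)}{x^k}=2^{n+1}\frac{F_{n+1}(x)}{x^n}, \] and, if moreover $x\neq\pm 2i$, \[ \sum_{k=0}^n 2^k\frac{F_k(x)}{x^k}=\frac{x}{x^2+4}\Big(2^{n+1}\frac{L_{n+1}(x)}{x^{n+1}}-2\Big). \]
   Context: The Fibonacci polynomials $F_n(x)$ and Lucas polynomials $L_n(x)$ are defined by $F_0(x)=0$, $F_1(x)=1$, $L_0(x)=2$, $L_1(x)=x$ and $W_n(x)=xW_{n-1}(x)+W_{n-2}(x)$ for $n\ge2$ (for $W=F$ and $W=L$). Here $i=\sqrt{-1}$. *)

theory Defs
  imports Complex_Main
begin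

fun fibpoly :: "nat \<Rightarrow> complex \<Rightarrow> complex" where
  "fibpoly 0 x = 0"
| "fibpoly (Suc 0) x = 1"
| "fibpoly (Suc (Suc n)) x = x * fibpoly (Suc n) x + fibpoly n x"

fun lucaspoly :: "nat \<Rightarrow> complex \<Rightarrow> complex" where
  "lucaspoly 0 x = 2"
| "lucaspoly (Suc 0) x = x"
| "lucaspoly (Suc (Suc n)) x = x * lucaspoly (Suc n) x + lucaspoly n x"

end

theory Submission
  imports Defs
begin

text \<open>Both sums telescope. The identities L(n) = 2 F(n+1) - x F(n) and
2 L(n+1) = x L(n) + (x^2 + 4) F(n) say that 2^k L(k)/x^k and (x^2 + 4)/x times
2^k F(k)/x^k are the increments of k \<mapsto> x 2^k F(k)/x^k and of
k \<mapsto> 2^k L(k)/x^k, respectively.\<close>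

lemma lucaspoly_eq_fibpoly: "lucaspoly n x = 2 * fibpoly (Suc n) x - x * fibpoly n x"
  by (induction n x rule: fibpoly.induct) (auto simp: algebra_simps)

lemma lucaspoly_Suc_double:
  "2 * lucaspoly (Suc n) x = x * lucaspoly n x + (x^2 + 4) * fibpoly n x"
  by (simp add: lucaspoly_eq_fibpoly algebra_simps power2_eq_square)

lemma sum_scaled_lucaspoly:
  fixes x :: complex
  assumes "x \<noteq> 0"
  shows "(\<Sum>k=0..n. 2^k * lucaspoly k x / x^k) = 2^(n+1) * fibpoly (n+1) x / x^n"
proof -
  define a where "a k = x * (2^k * fibpoly k x / x^k)" for k
  have "2^k * lucaspoly k x / x^k = a (Suc k) - a k" for k
    using assms by (simp add: a_def lucaspoly_eq_fibpoly field_simps)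
  then have "(\<Sum>k=0..n. 2^k * lucaspoly k x / x^k) = a (Suc n) - a 0"
    by (simp add: sum_Suc_diff)
  also have "\<dots> = 2^(n+1) * fibpoly (n+1) x / x^n"
    using assms by (simp add: a_def field_simps)
  finally show ?thesis .
qed

lemma sum_scaled_fibpoly:
  fixes x :: complex
  assumes "x \<noteq> 0" and "x^2 + 4 \<noteq> 0"
  shows "(\<Sum>k=0..n. 2^k * fibpoly k x / x^k)
           = x / (x^2 + 4) * (2^(n+1) * lucaspoly (n+1) x / x^(n+1) - 2)"
proof -
  define b where "b k = 2^k * lucaspoly k x / x^k" for k
  have "(x^2 + 4) / x * (2^k * fibpoly k x / x^k) = b (Suc k) - b k" for k
  proof -
    have "b (Suc k) - b k = 2^k * (2 * lucaspoly (Suc k) x - x * lucaspoly k x) / x^Suc k"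
      using assms(1) by (simp add: b_def field_simps)
    then show ?thesis
      unfolding lucaspoly_Suc_double using assms(1) by (simp add: field_simps)
  qed
  then have "(x^2 + 4) / x * (\<Sum>k=0..n. 2^k * fibpoly k x / x^k) = b (Suc n) - b 0"
    by (simp add: sum_distrib_left sum_Suc_diff)
  moreover have "(\<Sum>k=0..n. 2^k * fibpoly k x / x^k)
      = x / (x^2 + 4) * ((x^2 + 4) / x * (\<Sum>k=0..n. 2^k * fibpoly k x / x^k))"
    using assms by simp
  ultimately show ?thesis
    by (simp add: b_def)
qed

lemma power2_add_4_eq_0_iff: "(x::complex)^2 + 4 = 0 \<longleftrightarrow> x = 2 * \<i> \<or> x = - 2 * \<i>"
proof -
  have "x^2 + 4 = (x - 2 * \<i>) * (x + 2 * \<i>)"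
    by (simp add: algebra_simps power2_eq_square)
  then show ?thesis
    by (auto simp: add_eq_0_iff)
qed

theorem corollary5:
  fixes x :: complex and n :: nat
  assumes "x \<noteq> 0"
  shows "(\<Sum>k=0..n. 2^k * lucaspoly k x / x^k) = 2^(n+1) * fibpoly (n+1) x / x^n
    \<and> (x \<noteq> 2 * \<i> \<and> x \<noteq> - 2 * \<i> \<longrightarrow>
         (\<Sum>k=0..n. 2^k * fibpoly k x / x^k)
           = x / (x^2 + 4) * (2^(n+1) * lucaspoly (n+1) x / x^(n+1) - 2))"
  using sum_scaled_lucaspoly[OF assms] sum_scaled_fibpoly[OF assms]
  by (simp add: power2_add_4_eq_0_iff)

end
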